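(* Consider any $(M,N)$-VLF code over a DMC $P_{Y|X}$ with finite alphabets. Then for every $n\ge0$, almost surely, $$\mathbb{E}\big[\ln\mathcal{H}(W|Y^n)-\ln\mathcal{H}(W|Y^{n+1})\,\big|\,Y^n\big]\le B.$$
   Context: $B=\max_{x,x'\in\mathcal{X}}D(P_{Y|X}(\cdot|x)\|P_{Y|X}(\cdot|x'))$ (possibly $+\infty$). An $(M,N)$-VLF code has a message $W$ uniform on $\{1,\dots,M\}$ and encoders $X_n=f_n(W,Y^{n-1})$, where conditionally on $(W,X^n,Y^{n-1})$ the output $Y_n$ has law $P_{Y|X}(\cdot|X_n)$ (feedback of past outputs to the encoder). The random conditional entropy is $\mathcal{H}(W|Y^n)=-\sum_{w=1}^M\mathbb{P}(W=w|Y^n)\ln\mathbb{P}(W=w|Y^n)$ (natural logarithms). *)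

theory Defs
  imports Complex_Main "HOL-Library.Extended_Real"
begin

text \<open>A DMC with finite input type 'x and finite output type 'y is a stochastic
  matrix P x y = P_{Y|X}(y|x).\<close>
definition dmc :: "('x::finite \<Rightarrow> 'y::finite \<Rightarrow> real) \<Rightarrow> bool" where
  "dmc P \<longleftrightarrow> (\<forall>x y. 0 \<le> P x y) \<and> (\<forall>x. (\<Sum>y\<in>UNIV. P x y) = 1)"

definition kl_div :: "('x::finite \<Rightarrow> 'y::finite \<Rightarrow> real) \<Rightarrow> 'x \<Rightarrow> 'x \<Rightarrow> ereal" where
  "kl_div P x x' =
     (if \<exists>y. P x y > 0 \<and> P x' y = 0 then \<infinity>
      else ereal (\<Sum>y\<in>UNIV. if P x y = 0 then 0 else P x y * ln (P x y / P x' y)))"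

definition capB :: "('x::finite \<Rightarrow> 'y::finite \<Rightarrow> real) \<Rightarrow> ereal" where
  "capB P = (SUP xx'\<in>UNIV. kl_div P (fst xx') (snd xx'))"

text \<open>Encoders: X_{k+1} = f k w (Y_1 ... Y_k), i.e. 0-indexed time k, applied to
  the list of the first k outputs.  Joint probability P(W = w, Y^n = ys)
  with W uniform on {1..M}.\<close>
definition joint :: "('x::finite \<Rightarrow> 'y::finite \<Rightarrow> real) \<Rightarrow> nat \<Rightarrow>
    (nat \<Rightarrow> nat \<Rightarrow> 'y list \<Rightarrow> 'x) \<Rightarrow> nat \<Rightarrow> 'y list \<Rightarrow> real" where
  "joint P M f w ys =
     (if w \<in> {1..M} then (1 / real M) * (\<Prod>k<length ys. P (f k w (take k ys)) (ys ! k))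
      else 0)"

definition outp :: "('x::finite \<Rightarrow> 'y::finite \<Rightarrow> real) \<Rightarrow> nat \<Rightarrow>
    (nat \<Rightarrow> nat \<Rightarrow> 'y list \<Rightarrow> 'x) \<Rightarrow> 'y list \<Rightarrow> real" where
  "outp P M f ys = (\<Sum>w\<in>{1..M}. joint P M f w ys)"

definition post :: "('x::finite \<Rightarrow> 'y::finite \<Rightarrow> real) \<Rightarrow> nat \<Rightarrow>
    (nat \<Rightarrow> nat \<Rightarrow> 'y list \<Rightarrow> 'x) \<Rightarrow> nat \<Rightarrow> 'y list \<Rightarrow> real" where
  "post P M f w ys = joint P M f w ys / outp P M f ys"

text \<open>Random conditional entropy H(W|Y^n) evaluated at Y^n = ys (0 ln 0 = 0).\<close>
definition condH :: "('x::finite \<Rightarrow> 'y::finite \<Rightarrow> real) \<Rightarrow> nat \<Rightarrow>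
    (nat \<Rightarrow> nat \<Rightarrow> 'y list \<Rightarrow> 'x) \<Rightarrow> 'y list \<Rightarrow> real" where
  "condH P M f ys = - (\<Sum>w\<in>{1..M}. post P M f w ys * ln (post P M f w ys))"

text \<open>E[ ln H(W|Y^n) - ln H(W|Y^{n+1}) | Y^n = ys ], for P(Y^n = ys) > 0.\<close>
definition drift :: "('x::finite \<Rightarrow> 'y::finite \<Rightarrow> real) \<Rightarrow> nat \<Rightarrow>
    (nat \<Rightarrow> nat \<Rightarrow> 'y list \<Rightarrow> 'x) \<Rightarrow> 'y list \<Rightarrow> real" where
  "drift P M f ys =
     (\<Sum>y\<in>UNIV. (outp P M f (ys @ [y]) / outp P M f ys) *
        (ln (condH P M f ys) - ln (condH P M f (ys @ [y]))))"

end

theory Submission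
  imports Defs "HOL-Analysis.Derivative"
begin

text \<open>Fix the outputs received so far. Let \<open>p\<close> be the posterior of the message, \<open>g w\<close> the
  output distribution of the channel input that message \<open>w\<close> sends next, \<open>Q = \<Sum>w. p w g w\<close>
  the distribution of the next output, \<open>q y\<close> the posterior after observing \<open>y\<close>, \<open>H\<close> the
  entropy and \<open>h t = - t ln t\<close>. The log-sum inequality with weights \<open>h (p w) / H p\<close> gives
  \<open>ln H p - ln H (q y) \<le> \<Sum>w. h (p w) / H p * (ln h (p w) - ln h (q y w))\<close>.
  Convexity of \<open>psi t = ln h t + (2 t - 1) ln (t / (1 - t))\<close> on \<open>(0, 1)\<close> bounds
  \<open>Q y * (ln h (p w) - ln h (q y w))\<close> by
  \<open>p w g w y ln (g w y / R w y) + (1 - p w) R w y ln (R w y / g w y) + c (g w y - Q y)\<close>,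
  where \<open>R w\<close> is the output distribution given that the message is not \<open>w\<close>. Summed over
  \<open>y\<close>, the linear term vanishes and what remains is
  \<open>p w D(g w || R w) + (1 - p w) D(R w || g w)\<close>, which is at most \<open>B\<close> because relative
  entropy is convex in each argument.\<close>

section \<open>An auxiliary convex function\<close>

definition psi :: "real \<Rightarrow> real" where
  "psi t = 2*t*ln t - (2*t - 1)*ln (1 - t) + ln (- ln t)"

definition psi' :: "real \<Rightarrow> real" where
  "psi' t = 2*ln t + 2 - 2*ln (1 - t) + (2*t - 1)/(1 - t) + 1/(t*ln t)"

definition psi'' :: "real \<Rightarrow> real" where
  "psi'' t = 2/t + 2/(1 - t) + 1/(1 - t)^2 - (ln t + 1)/(t*ln t)^2"

lemma psi_has_derivative:
  assumes "t \<in> {0<..<1::real}"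
  shows "(psi has_real_derivative psi' t) (at t)"
proof -
  have "ln t < 0" using assms by simp
  then have "(psi has_real_derivative
      (2*ln t + 2) - (2*ln (1 - t) - (2*t - 1)/(1 - t)) + 1/(t*ln t)) (at t)"
    using assms unfolding psi_def [abs_def] by (auto intro!: derivative_eq_intros)
  then show ?thesis by (rule DERIV_cong) (simp add: psi'_def algebra_simps)
qed

lemma psi'_has_derivative:
  assumes "t \<in> {0<..<1::real}"
  shows "(psi' has_real_derivative psi'' t) (at t)"
proof -
  have "ln t < 0" using assms by simp
  then have "(psi' has_real_derivative
      (2/t + 2/(1 - t)) + 1/(1 - t)^2 + (- (ln t + 1)/(t*ln t)^2)) (at t)"
    using assms unfolding psi'_def [abs_def]
    by (auto intro!: derivative_eq_intros simp: field_simps power2_eq_square)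
  then show ?thesis by (rule DERIV_cong) (simp add: psi''_def diff_divide_distrib add_divide_distrib)
qed

lemma psi''_nonneg:
  assumes "t \<in> {0<..<1::real}"
  shows "psi'' t \<ge> 0"
proof -
  have t: "0 < t" "t < 1" using assms by auto
  define l where "l = ln t"
  have l: "l < 0" "l \<le> t - 1" using t ln_le_minus_one by (auto simp: l_def)
  have rational_part: "2/t + 2/(1 - t) + 1/(1 - t)^2 = (1/(1 - t)^2 - 1)/t^2"
    using t by (simp add: divide_simps power2_eq_square) algebra
  show ?thesis
  proof (cases "l + 1 \<le> 0")
    case True
    then have "(l + 1)/(t*l)^2 \<le> 0" by (simp add: divide_nonpos_nonneg)
    moreover have "2/t + 2/(1 - t) + 1/(1 - t)^2 \<ge> 0" using t by simp
    ultimately show ?thesis unfolding psi''_def l_def [symmetric] by linarith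
  next
    case False
    have "(1 - t)^2 \<le> l^2"
      using power_mono [of "1 - t" "- l" 2] l t by simp
    then have "1/l^2 \<le> 1/(1 - t)^2" using t l by (intro divide_left_mono) auto
    moreover have "1/l \<le> -1" using False l by (simp add: divide_le_eq)
    ultimately have "(1/l^2 + 1/l)/t^2 \<le> (1/(1 - t)^2 - 1)/t^2"
      by (intro divide_right_mono) auto
    moreover have "(l + 1)/(t*l)^2 = (1/l^2 + 1/l)/t^2"
      using t l by (simp add: field_simps power2_eq_square)
    ultimately show ?thesis unfolding psi''_def l_def [symmetric] rational_part by linarith
  qed
qed

lemma convex_on_psi: "convex_on {0<..<1} psi"
  by (rule f''_ge0_imp_convex [where f' = psi' and f'' = psi''])
    (auto intro: psi_has_derivative psi'_has_derivative psi''_nonneg)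

definition psi_slope :: "real \<Rightarrow> real" where
  "psi_slope p = 2*(ln p - ln (1 - p)) - psi' p"

text \<open>The tangent of the convex function \<open>psi\<close> at \<open>p\<close>, rewritten in terms of \<open>ln (- t ln t)\<close>.\<close>
lemma ln_neg_xlnx_diff_le:
  assumes p: "p \<in> {0<..<1::real}" and t: "t \<in> {0<..<1::real}"
  shows "ln (- (p*ln p)) - ln (- (t*ln t))
    \<le> (2*t - 1)*(ln ((1 - p)*t) - ln (p*(1 - t))) + psi_slope p * (t - p)"
proof -
  have ln_neg_xlnx: "ln (- (x*ln x)) = ln x + ln (- ln x)" if "x \<in> {0<..<1::real}" for x
    using that ln_mult [of x "- ln x"] by simp
  have ln_odds: "ln ((1 - p)*t) - ln (p*(1 - t)) = ln (1 - p) + ln t - ln p - ln (1 - t)"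
    using p t by (simp add: ln_mult)
  have "psi t - psi p \<ge> psi' p * (t - p)"
    by (rule convex_on_imp_above_tangent [OF convex_on_psi])
      (use p t in \<open>auto intro!: has_field_derivative_at_within psi_has_derivative
        simp: convex_connected\<close>)
  then show ?thesis
    unfolding ln_neg_xlnx [OF p] ln_neg_xlnx [OF t] ln_odds
    by (simp add: psi_def psi_slope_def algebra_simps)
qed

section \<open>Relative entropy and entropy\<close>

definition kl_term :: "real \<Rightarrow> real \<Rightarrow> real" where
  "kl_term a b = (if a = 0 then 0 else a * ln (a / b))"

lemma kl_term_eq_diff_ln:
  "a > 0 \<Longrightarrow> b > 0 \<Longrightarrow> kl_term a b = a * ln a - a * ln b"
  by (simp add: kl_term_def ln_div algebra_simps)

lemma kl_term_self: "kl_term a a = 0"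
  by (cases "a = 0") (simp_all add: kl_term_def)

lemma convex_comb_pos:
  fixes b :: "'v \<Rightarrow> real"
  assumes "finite V" "(\<Sum>v\<in>V. c v) = 1" "\<And>v. v \<in> V \<Longrightarrow> c v \<ge> 0"
    and "\<And>v. v \<in> V \<Longrightarrow> b v > 0"
  shows "(\<Sum>v\<in>V. c v * b v) > 0"
proof -
  obtain v where v: "v \<in> V" "c v > 0"
    using assms(2,3) by (metis less_eq_real_def sum_nonpos zero_less_one not_le)
  have "c v * b v > 0" using v assms(4) [OF v(1)] by simp
  also have "c v * b v \<le> (\<Sum>v\<in>V. c v * b v)"
    using assms v by (intro member_le_sum) (auto intro!: mult_nonneg_nonneg simp: less_imp_le)
  finally show ?thesis .
qed

lemma convex_on_xlnx: "convex_on {0<..} (\<lambda>x::real. x * ln x)"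
  by (rule f''_ge0_imp_convex [where f' = "\<lambda>x. ln x + 1" and f'' = "\<lambda>x. 1/x"])
    (auto intro!: derivative_eq_intros)

lemma kl_term_convex_comb_right:
  assumes "finite V" "(\<Sum>v\<in>V. c v) = 1" "\<And>v. v \<in> V \<Longrightarrow> c v \<ge> 0"
    and "\<And>v. v \<in> V \<Longrightarrow> b v > 0" and "a > 0"
  shows "kl_term a (\<Sum>v\<in>V. c v * b v) \<le> (\<Sum>v\<in>V. c v * kl_term a (b v))"
proof -
  have "(\<Sum>v\<in>V. c v * ln (b v)) \<le> ln (\<Sum>v\<in>V. c v *\<^sub>R b v)"
    using assms by (intro concave_on_sum [OF _ _ ln_concave]) auto
  then have "a * (\<Sum>v\<in>V. c v * ln (b v)) \<le> a * ln (\<Sum>v\<in>V. c v * b v)"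
    using \<open>a > 0\<close> by simp
  moreover have "(\<Sum>v\<in>V. c v * kl_term a (b v))
      = (\<Sum>v\<in>V. c v * (a * ln a) - a * (c v * ln (b v)))"
    using assms by (intro sum.cong) (simp_all add: kl_term_eq_diff_ln algebra_simps)
  ultimately show ?thesis
    using assms by (simp add: kl_term_eq_diff_ln convex_comb_pos sum_subtractf
        flip: sum_distrib_left sum_distrib_right)
qed

lemma kl_term_convex_comb_left:
  assumes "finite V" "(\<Sum>v\<in>V. c v) = 1" "\<And>v. v \<in> V \<Longrightarrow> c v \<ge> 0"
    and "\<And>v. v \<in> V \<Longrightarrow> b v > 0" and "a > 0"
  shows "kl_term (\<Sum>v\<in>V. c v * b v) a \<le> (\<Sum>v\<in>V. c v * kl_term (b v) a)"
proof -
  have "(\<Sum>v\<in>V. c v *\<^sub>R b v) * ln (\<Sum>v\<in>V. c v *\<^sub>R b v) \<le> (\<Sum>v\<in>V. c v * (b v * ln (b v)))"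
    using assms by (intro convex_on_sum [OF _ _ convex_on_xlnx]) auto
  moreover have "(\<Sum>v\<in>V. c v * kl_term (b v) a)
      = (\<Sum>v\<in>V. c v * (b v * ln (b v)) - (c v * b v) * ln a)"
    using assms by (intro sum.cong) (simp_all add: kl_term_eq_diff_ln algebra_simps)
  ultimately show ?thesis
    using assms by (simp add: kl_term_eq_diff_ln convex_comb_pos sum_subtractf
        flip: sum_distrib_right)
qed

lemma sum_convex_comb_le:
  fixes F :: "'v \<Rightarrow> 'y \<Rightarrow> real"
  assumes "finite V" "(\<Sum>v\<in>V. c v) = 1" "\<And>v. v \<in> V \<Longrightarrow> c v \<ge> 0"
    and "\<And>v. v \<in> V \<Longrightarrow> (\<Sum>y\<in>Y. F v y) \<le> \<beta>"
  shows "(\<Sum>y\<in>Y. \<Sum>v\<in>V. c v * F v y) \<le> \<beta>"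
proof -
  have "(\<Sum>y\<in>Y. \<Sum>v\<in>V. c v * F v y) = (\<Sum>v\<in>V. c v * (\<Sum>y\<in>Y. F v y))"
    by (subst sum.swap) (simp add: sum_distrib_left)
  also have "\<dots> \<le> (\<Sum>v\<in>V. c v * \<beta>)"
    using assms by (intro sum_mono mult_left_mono) auto
  also have "\<dots> = \<beta>"
    using assms(2) by (simp flip: sum_distrib_right)
  finally show ?thesis .
qed

definition entropy :: "'w set \<Rightarrow> ('w \<Rightarrow> real) \<Rightarrow> real" where
  "entropy W r = - (\<Sum>w\<in>W. r w * ln (r w))"

lemma xlnx_nonpos: "0 \<le> r \<Longrightarrow> r \<le> 1 \<Longrightarrow> r * ln r \<le> (0::real)"
  by (cases "r = 0") (auto intro!: mult_nonneg_nonpos)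

lemma neg_xlnx_pos: "0 < r \<Longrightarrow> r < 1 \<Longrightarrow> - (r * ln r) > (0::real)"
  by (simp add: mult_pos_neg)

lemma sum_neg_xlnx_le_entropy:
  assumes "finite W" "A \<subseteq> W" "\<And>w. w \<in> W \<Longrightarrow> 0 \<le> r w \<and> r w \<le> 1"
  shows "(\<Sum>w\<in>A. - (r w * ln (r w))) \<le> entropy W r"
  unfolding entropy_def sum_negf [symmetric]
  using assms xlnx_nonpos by (intro sum_mono2) auto

lemma entropy_eq_sum_uncertain:
  assumes "finite W" "\<And>w. w \<in> W \<Longrightarrow> 0 \<le> r w \<and> r w \<le> 1"
  shows "entropy W r = (\<Sum>w\<in>{w\<in>W. 0 < r w \<and> r w < 1}. - (r w * ln (r w)))"
proof -
  have "r w * ln (r w) = 0" if "w \<in> W - {w\<in>W. 0 < r w \<and> r w < 1}" for w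
    using that assms(2) [of w] by (cases "r w = 0") auto
  then show ?thesis
    unfolding entropy_def sum_negf [symmetric]
    by (intro sum.mono_neutral_right) (auto simp: assms(1))
qed

lemma entropy_eq_0:
  assumes "\<And>w. w \<in> W \<Longrightarrow> r w = 0 \<or> r w = 1"
  shows "entropy W r = 0"
proof -
  have "r w * ln (r w) = 0" if "w \<in> W" for w
    using assms [OF that] by auto
  then show ?thesis unfolding entropy_def by (simp add: sum.neutral)
qed

lemma entropy_nonneg:
  assumes "\<And>w. w \<in> W \<Longrightarrow> 0 \<le> r w \<and> r w \<le> 1"
  shows "entropy W r \<ge> 0"
  unfolding entropy_def using assms xlnx_nonpos by (simp add: sum_nonpos)

lemma entropy_eq_0_imp_point_mass:
  assumes "finite W" "\<And>w. w \<in> W \<Longrightarrow> 0 \<le> r w \<and> r w \<le> 1" "(\<Sum>w\<in>W. r w) = 1"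
    and "entropy W r = 0"
  obtains w0 where "w0 \<in> W" "r w0 = 1" "\<And>v. v \<in> W - {w0} \<Longrightarrow> r v = 0"
proof -
  have "{w\<in>W. 0 < r w \<and> r w < 1} = {}"
  proof (rule ccontr)
    assume "{w\<in>W. 0 < r w \<and> r w < 1} \<noteq> {}"
    then have "(\<Sum>w\<in>{w\<in>W. 0 < r w \<and> r w < 1}. - (r w * ln (r w))) > 0"
      using assms(1) by (intro sum_pos) (auto simp: mult_pos_neg)
    then show False using assms(4) entropy_eq_sum_uncertain [OF assms(1,2)] by simp
  qed
  then have zero_or_one: "r w = 0 \<or> r w = 1" if "w \<in> W" for w
    using that assms(2) [OF that] by fastforce
  obtain w0 where w0: "w0 \<in> W" "r w0 \<noteq> 0"
    using assms(3) sum.neutral [of W r] by (metis zero_neq_one)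
  have "(\<Sum>v\<in>W - {w0}. r v) = 0"
    using assms(3) zero_or_one [OF w0(1)] w0 sum.remove [OF assms(1) w0(1), of r] by simp
  then have "r v = 0" if "v \<in> W - {w0}" for v
    using that assms(1,2) sum_nonneg_eq_0_iff [of "W - {w0}" r] by auto
  then show ?thesis using that w0 zero_or_one by blast
qed

lemma ln_sum_diff_le:
  fixes x y :: "'w \<Rightarrow> real"
  assumes "finite A" "A \<noteq> {}" "\<And>w. w \<in> A \<Longrightarrow> x w > 0" "\<And>w. w \<in> A \<Longrightarrow> y w > 0"
  shows "ln (\<Sum>w\<in>A. y w) - ln (\<Sum>w\<in>A. x w)
    \<le> (\<Sum>w\<in>A. y w / (\<Sum>w\<in>A. y w) * (ln (y w) - ln (x w)))"
proof -
  define Y where "Y = (\<Sum>w\<in>A. y w)"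
  have Y: "Y > 0" unfolding Y_def using assms by (intro sum_pos) auto
  have X: "(\<Sum>w\<in>A. x w) > 0" using assms by (intro sum_pos) auto
  have weights: "(\<Sum>w\<in>A. y w / Y) = 1"
    using Y by (simp add: Y_def flip: sum_divide_distrib)
  have weights_pos: "y w / Y > 0" if "w \<in> A" for w
    using assms(4) [OF that] Y by simp
  have "(\<Sum>w\<in>A. y w / Y * ln (x w / y w)) \<le> ln (\<Sum>w\<in>A. (y w / Y) *\<^sub>R (x w / y w))"
    using assms weights_pos weights
    by (intro concave_on_sum [OF _ _ ln_concave]) (auto simp: less_imp_le)
  also have "(\<Sum>w\<in>A. (y w / Y) *\<^sub>R (x w / y w)) = (\<Sum>w\<in>A. x w) / Y"
    using assms(4) by (simp add: sum_divide_distrib less_imp_neq [symmetric])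
  also have "ln ((\<Sum>w\<in>A. x w) / Y) = ln (\<Sum>w\<in>A. x w) - ln Y"
    using X Y by (simp add: ln_div)
  finally have "ln Y - ln (\<Sum>w\<in>A. x w) \<le> - (\<Sum>w\<in>A. y w / Y * ln (x w / y w))"
    by simp
  also have "\<dots> = (\<Sum>w\<in>A. y w / Y * (ln (y w) - ln (x w)))"
    unfolding sum_negf [symmetric]
  proof (intro sum.cong refl)
    fix w assume "w \<in> A"
    then have ln_ratio: "ln (x w / y w) = ln (x w) - ln (y w)"
      using assms(3,4) [of w] by (simp add: ln_div)
    show "- (y w / Y * ln (x w / y w)) = y w / Y * (ln (y w) - ln (x w))"
      unfolding ln_ratio by (simp add: algebra_simps)
  qed
  finally show ?thesis by (simp add: Y_def)
qed

section \<open>Mixtures of channel rows with bounded divergence\<close>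

definition mixture :: "'w set \<Rightarrow> ('w \<Rightarrow> real) \<Rightarrow> ('w \<Rightarrow> 'y \<Rightarrow> real) \<Rightarrow> 'y \<Rightarrow> real" where
  "mixture W p g y = (\<Sum>w\<in>W. p w * g w y)"

locale bounded_divergence_channel =
  fixes W :: "'w set" and p :: "'w \<Rightarrow> real" and g :: "'w \<Rightarrow> 'y::finite \<Rightarrow> real"
    and \<beta> :: real
  assumes finite_W: "finite W"
    and p_nonneg: "\<And>w. w \<in> W \<Longrightarrow> p w \<ge> 0"
    and sum_p: "(\<Sum>w\<in>W. p w) = 1"
    and g_nonneg: "\<And>w y. w \<in> W \<Longrightarrow> g w y \<ge> 0"
    and sum_g: "\<And>w. w \<in> W \<Longrightarrow> (\<Sum>y\<in>UNIV. g w y) = 1"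
    and same_support: "\<And>w v y. w \<in> W \<Longrightarrow> v \<in> W \<Longrightarrow> g w y > 0 \<Longrightarrow> g v y > 0"
    and divergence_le: "\<And>w v. w \<in> W \<Longrightarrow> v \<in> W \<Longrightarrow> (\<Sum>y\<in>UNIV. kl_term (g w y) (g v y)) \<le> \<beta>"
begin

abbreviation Q :: "'y \<Rightarrow> real" where
  "Q \<equiv> mixture W p g"

abbreviation posterior :: "'y \<Rightarrow> 'w \<Rightarrow> real" where
  "posterior y w \<equiv> p w * g w y / Q y"

lemma Q_nonneg: "Q y \<ge> 0"
  unfolding mixture_def by (intro sum_nonneg) (simp add: p_nonneg g_nonneg)

lemma sum_Q: "(\<Sum>y\<in>UNIV. Q y) = 1"
proof -
  have "(\<Sum>y\<in>UNIV. Q y) = (\<Sum>w\<in>W. p w * (\<Sum>y\<in>UNIV. g w y))"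
    unfolding mixture_def by (subst sum.swap) (simp add: sum_distrib_left)
  then show ?thesis by (simp add: sum_g sum_p)
qed

lemma p_le_1: "w \<in> W \<Longrightarrow> p w \<le> 1"
  using member_le_sum [of w W p] finite_W p_nonneg sum_p by auto

lemma beta_nonneg: "\<beta> \<ge> 0"
proof -
  obtain w where "w \<in> W" using sum_p by force
  then show ?thesis using divergence_le [of w w] by (simp add: kl_term_self)
qed

lemma g_eq_0_if_Q_eq_0: "Q y = 0 \<Longrightarrow> w \<in> W \<Longrightarrow> p w > 0 \<Longrightarrow> g w y = 0"
  unfolding mixture_def using finite_W p_nonneg g_nonneg
  by (subst (asm) sum_nonneg_eq_0_iff) auto

lemma g_pos_if_Q_pos:
  assumes "Q y > 0" "w \<in> W"
  shows "g w y > 0"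
proof -
  obtain v where "v \<in> W" "p v * g v y \<noteq> 0"
    using assms(1) sum.neutral [of W "\<lambda>v. p v * g v y"] by (force simp: mixture_def)
  then have "g v y > 0" using g_nonneg [of v y] by (auto simp: less_le)
  then show ?thesis using same_support \<open>v \<in> W\<close> assms(2) by blast
qed

lemma posterior_bounds:
  assumes "w \<in> W"
  shows "0 \<le> posterior y w \<and> posterior y w \<le> 1"
proof (cases "Q y = 0")
  case False
  have "p w * g w y \<le> Q y"
    unfolding mixture_def using assms finite_W p_nonneg g_nonneg
    by (intro member_le_sum) auto
  then show ?thesis using False Q_nonneg [of y] assms p_nonneg g_nonneg by auto
qed simp

definition mixture_others :: "'w \<Rightarrow> 'y \<Rightarrow> real" where
  "mixture_others w = mixture (W - {w}) (\<lambda>v. p v / (1 - p w)) g"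

definition kl_bound :: "'w \<Rightarrow> 'y \<Rightarrow> real" where
  "kl_bound w y = p w * kl_term (g w y) (mixture_others w y)
    + (1 - p w) * kl_term (mixture_others w y) (g w y)
    + psi_slope (p w) * p w * (g w y - Q y)"

context
  fixes w assumes w: "w \<in> W" "0 < p w" "p w < 1"
begin

lemma sum_other_weights: "(\<Sum>v\<in>W - {w}. p v / (1 - p w)) = 1"
proof -
  have "(\<Sum>v\<in>W - {w}. p v) = 1 - p w"
    using sum_p sum.remove [OF finite_W w(1), of p] by simp
  then show ?thesis using w by (simp flip: sum_divide_distrib)
qed

lemma other_weights_nonneg: "v \<in> W - {w} \<Longrightarrow> p v / (1 - p w) \<ge> 0"
  using w p_nonneg by simp

lemma Q_eq_split: "Q y = p w * g w y + (1 - p w) * mixture_others w y"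
  using sum.remove [OF finite_W w(1), of "\<lambda>v. p v * g v y"] w
  by (simp add: mixture_others_def mixture_def sum_distrib_left)

lemma mixture_others_pos:
  assumes "Q y > 0"
  shows "mixture_others w y > 0"
proof -
  have "g v y > 0" if "v \<in> W" for v
    using assms that by (rule g_pos_if_Q_pos)
  then show ?thesis
    unfolding mixture_others_def mixture_def
    using finite_W sum_other_weights other_weights_nonneg by (intro convex_comb_pos) auto
qed

lemma divergence_row_others_le: "(\<Sum>y\<in>UNIV. kl_term (g w y) (mixture_others w y)) \<le> \<beta>"
proof -
  have "(\<Sum>y\<in>UNIV. kl_term (g w y) (mixture_others w y))
      \<le> (\<Sum>y\<in>UNIV. \<Sum>v\<in>W - {w}. p v / (1 - p w) * kl_term (g w y) (g v y))"
  proof (intro sum_mono)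
    fix y
    show "kl_term (g w y) (mixture_others w y)
      \<le> (\<Sum>v\<in>W - {w}. p v / (1 - p w) * kl_term (g w y) (g v y))"
    proof (cases "g w y = 0")
      case False
      then have "g w y > 0" using g_nonneg [OF w(1)] by (simp add: less_le)
      then show ?thesis
        unfolding mixture_others_def mixture_def
        using finite_W sum_other_weights other_weights_nonneg same_support w(1)
        by (intro kl_term_convex_comb_right) auto
    qed (simp add: kl_term_def)
  qed
  also have "\<dots> \<le> \<beta>"
    using finite_W sum_other_weights other_weights_nonneg divergence_le w(1)
    by (intro sum_convex_comb_le) auto
  finally show ?thesis .
qed

lemma divergence_others_row_le: "(\<Sum>y\<in>UNIV. kl_term (mixture_others w y) (g w y)) \<le> \<beta>"
proof -
  have "(\<Sum>y\<in>UNIV. kl_term (mixture_others w y) (g w y))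
      \<le> (\<Sum>y\<in>UNIV. \<Sum>v\<in>W - {w}. p v / (1 - p w) * kl_term (g v y) (g w y))"
  proof (intro sum_mono)
    fix y
    show "kl_term (mixture_others w y) (g w y)
      \<le> (\<Sum>v\<in>W - {w}. p v / (1 - p w) * kl_term (g v y) (g w y))"
    proof (cases "g w y = 0")
      case True
      then have "g v y = 0" if "v \<in> W" for v
        using that same_support [of v w y] g_nonneg [of v y] w(1) by (auto simp: less_le)
      then show ?thesis
        unfolding mixture_others_def mixture_def by (simp add: kl_term_def)
    next
      case False
      then have "g w y > 0" using g_nonneg [OF w(1)] by (simp add: less_le)
      then show ?thesis
        unfolding mixture_others_def mixture_def
        using finite_W sum_other_weights other_weights_nonneg same_support w(1)
        by (intro kl_term_convex_comb_left) auto
    qed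
  qed
  also have "\<dots> \<le> \<beta>"
    using finite_W sum_other_weights other_weights_nonneg divergence_le w(1)
    by (intro sum_convex_comb_le) auto
  finally show ?thesis .
qed

lemma posterior_lt_1:
  assumes "Q y > 0"
  shows "posterior y w < 1"
proof -
  have "(1 - p w) * mixture_others w y > 0"
    using w mixture_others_pos [OF assms] by simp
  then have "p w * g w y < Q y" using Q_eq_split [of y] by linarith
  then show ?thesis using assms by simp
qed

lemma kl_bound_eq_0_if_Q_eq_0:
  assumes "Q y = 0"
  shows "kl_bound w y = 0"
proof -
  have "g w y = 0" using g_eq_0_if_Q_eq_0 [OF assms w(1,2)] .
  moreover from this have "mixture_others w y = 0"
    using Q_eq_split [of y] assms w by simp
  ultimately show ?thesis using assms by (simp add: kl_bound_def kl_term_def)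
qed

lemma ln_odds_posterior:
  assumes Q: "Q y > 0"
  shows "ln ((1 - p w) * posterior y w) - ln (p w * (1 - posterior y w))
    = ln (g w y) - ln (mixture_others w y)"
proof -
  have G: "g w y > 0" by (rule g_pos_if_Q_pos [OF Q w(1)])
  have R: "mixture_others w y > 0" by (rule mixture_others_pos [OF Q])
  have "1 - posterior y w = (1 - p w) * mixture_others w y / Q y"
    using Q Q_eq_split [of y] by (simp add: field_simps)
  then have "p w * (1 - posterior y w) = (1 - p w) * p w * mixture_others w y / Q y"
    by simp
  moreover have "(1 - p w) * posterior y w = (1 - p w) * p w * g w y / Q y"
    by simp
  ultimately show ?thesis
    using w G R Q by (simp add: ln_mult ln_div)
qed

lemma ln_neg_xlnx_posterior_le_kl_bound:
  assumes Q: "Q y > 0"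
  shows "Q y * (ln (- (p w * ln (p w))) - ln (- (posterior y w * ln (posterior y w))))
    \<le> kl_bound w y"
proof -
  define t where "t = posterior y w"
  define G where "G = g w y"
  define R where "R = mixture_others w y"
  have G: "G > 0" unfolding G_def by (rule g_pos_if_Q_pos [OF Q w(1)])
  have R: "R > 0" unfolding R_def by (rule mixture_others_pos [OF Q])
  have t: "t \<in> {0<..<1}"
    using G Q w posterior_lt_1 [OF Q] by (simp add: t_def G_def)
  have odds_coeff: "Q y * (2*t - 1) = p w * G - (1 - p w) * R"
  proof -
    have "Q y * (2*t - 1) = 2 * (p w * G) - Q y"
      using Q by (simp add: t_def G_def field_simps)
    then show ?thesis using Q_eq_split [of y] by (simp add: G_def R_def)
  qed
  have slope_coeff: "Q y * (t - p w) = p w * (G - Q y)"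
    using Q by (simp add: t_def G_def field_simps)
  have "Q y * (ln (- (p w * ln (p w))) - ln (- (t * ln t)))
      \<le> Q y * ((2*t - 1)*(ln G - ln R) + psi_slope (p w) * (t - p w))"
    using ln_neg_xlnx_diff_le [of "p w" t] w t Q ln_odds_posterior [OF Q]
    by (simp add: t_def G_def R_def)
  also have "\<dots> = (Q y * (2*t - 1))*(ln G - ln R) + psi_slope (p w) * (Q y * (t - p w))"
    by (simp add: algebra_simps)
  also have "\<dots> = kl_bound w y"
    unfolding odds_coeff slope_coeff kl_bound_def G_def [symmetric] R_def [symmetric]
      kl_term_eq_diff_ln [OF G R] kl_term_eq_diff_ln [OF R G]
    by (simp add: algebra_simps)
  finally show ?thesis by (simp add: t_def)
qed

lemma sum_kl_bound_le: "(\<Sum>y\<in>UNIV. kl_bound w y) \<le> \<beta>"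
proof -
  have "(\<Sum>y\<in>UNIV. kl_bound w y)
      = p w * (\<Sum>y\<in>UNIV. kl_term (g w y) (mixture_others w y))
        + (1 - p w) * (\<Sum>y\<in>UNIV. kl_term (mixture_others w y) (g w y))
        + psi_slope (p w) * p w * ((\<Sum>y\<in>UNIV. g w y) - (\<Sum>y\<in>UNIV. Q y))"
    by (simp add: kl_bound_def sum.distrib sum_distrib_left sum_subtractf right_diff_distrib)
  also have "\<dots> \<le> p w * \<beta> + (1 - p w) * \<beta>"
    using divergence_row_others_le divergence_others_row_le w sum_g [OF w(1)] sum_Q
    by (simp add: add_mono mult_left_mono)
  finally show ?thesis by (simp add: algebra_simps)
qed

end

lemma log_entropy_drop_eq_0_if_entropy_eq_0:
  assumes "entropy W p = 0"
  shows "Q y * (ln (entropy W p) - ln (entropy W (posterior y))) = 0"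
proof -
  obtain w0 where w0: "w0 \<in> W" "p w0 = 1" "\<And>v. v \<in> W - {w0} \<Longrightarrow> p v = 0"
    using entropy_eq_0_imp_point_mass [OF finite_W _ sum_p assms] p_nonneg p_le_1 by metis
  then have "Q y = g w0 y"
    using sum.remove [OF finite_W w0(1), of "\<lambda>w. p w * g w y"] by (simp add: mixture_def)
  have "posterior y v = 0 \<or> posterior y v = 1" if "v \<in> W" for v
  proof (cases "v = w0")
    case True
    then show ?thesis using \<open>Q y = g w0 y\<close> w0 by auto
  qed (use that w0(3) in auto)
  then have "entropy W (posterior y) = 0"
    by (rule entropy_eq_0)
  then show ?thesis using assms by simp
qed

abbreviation uncertain :: "'w set" where
  "uncertain \<equiv> {w\<in>W. 0 < p w \<and> p w < 1}"

lemma entropy_eq_sum_uncertain_p: "entropy W p = (\<Sum>w\<in>uncertain. - (p w * ln (p w)))"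
  using finite_W p_nonneg p_le_1 by (intro entropy_eq_sum_uncertain) auto

lemma finite_uncertain: "finite uncertain"
  using finite_W by simp

lemma neg_xlnx_uncertain_pos:
  assumes "w \<in> uncertain"
  shows "- (p w * ln (p w)) > 0"
  using assms by (intro neg_xlnx_pos) auto

lemma uncertain_weight_nonneg:
  assumes "entropy W p > 0" "w \<in> uncertain"
  shows "- (p w * ln (p w)) / entropy W p \<ge> 0"
  using neg_xlnx_uncertain_pos [OF assms(2)] assms(1) by (intro divide_nonneg_pos) auto

lemma sum_uncertain_weights:
  assumes "entropy W p > 0"
  shows "(\<Sum>w\<in>uncertain. - (p w * ln (p w)) / entropy W p) = 1"
proof -
  have "(\<Sum>w\<in>uncertain. - (p w * ln (p w)) / entropy W p)
      = (\<Sum>w\<in>uncertain. - (p w * ln (p w))) / entropy W p"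
    by (rule sum_divide_distrib [symmetric])
  then show ?thesis using assms by (simp flip: entropy_eq_sum_uncertain_p)
qed

lemma log_entropy_drop_le_weighted_sum:
  assumes H: "entropy W p > 0" and Q: "Q y > 0"
  shows "ln (entropy W p) - ln (entropy W (posterior y))
    \<le> (\<Sum>w\<in>uncertain. - (p w * ln (p w)) / entropy W p
          * (ln (- (p w * ln (p w))) - ln (- (posterior y w * ln (posterior y w)))))"
proof -
  let ?h = "\<lambda>r::real. - (r * ln r)"
  have "uncertain \<noteq> {}" using H entropy_eq_sum_uncertain_p by (metis less_irrefl sum.empty)
  have neg_xlnx_posterior_pos: "?h (posterior y w) > 0" if "w \<in> uncertain" for w
    using that g_pos_if_Q_pos [OF Q] posterior_lt_1 [OF _ _ _ Q] Q
    by (intro neg_xlnx_pos) auto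
  have "(\<Sum>w\<in>uncertain. ?h (posterior y w)) \<le> entropy W (posterior y)"
    using finite_W posterior_bounds by (intro sum_neg_xlnx_le_entropy) auto
  moreover have "(\<Sum>w\<in>uncertain. ?h (posterior y w)) > 0"
    by (rule sum_pos [OF finite_uncertain \<open>uncertain \<noteq> {}\<close> neg_xlnx_posterior_pos])
  ultimately have "ln (entropy W p) - ln (entropy W (posterior y))
      \<le> ln (\<Sum>w\<in>uncertain. ?h (p w)) - ln (\<Sum>w\<in>uncertain. ?h (posterior y w))"
    using entropy_eq_sum_uncertain_p by simp
  also have "\<dots> \<le> (\<Sum>w\<in>uncertain.
      ?h (p w) / entropy W p * (ln (?h (p w)) - ln (?h (posterior y w))))"
    unfolding entropy_eq_sum_uncertain_p
    by (rule ln_sum_diff_le [OF finite_uncertain \<open>uncertain \<noteq> {}\<close>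
          neg_xlnx_posterior_pos neg_xlnx_uncertain_pos])
  finally show ?thesis .
qed

lemma log_entropy_drop_le_kl_bound:
  assumes H: "entropy W p > 0"
  shows "Q y * (ln (entropy W p) - ln (entropy W (posterior y)))
    \<le> (\<Sum>w\<in>uncertain. - (p w * ln (p w)) / entropy W p * kl_bound w y)"
proof (cases "Q y = 0")
  case True
  then show ?thesis by (simp add: kl_bound_eq_0_if_Q_eq_0)
next
  case False
  then have Q: "Q y > 0" using Q_nonneg [of y] by simp
  let ?h = "\<lambda>r::real. - (r * ln r)"
  have "Q y * (ln (entropy W p) - ln (entropy W (posterior y)))
      \<le> Q y * (\<Sum>w\<in>uncertain.
          ?h (p w) / entropy W p * (ln (?h (p w)) - ln (?h (posterior y w))))"
    by (rule mult_left_mono [OF log_entropy_drop_le_weighted_sum [OF H Q]]) (use Q in simp)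
  also have "\<dots> = (\<Sum>w\<in>uncertain. ?h (p w) / entropy W p
          * (Q y * (ln (?h (p w)) - ln (?h (posterior y w)))))"
    by (simp add: sum_distrib_left mult.left_commute)
  also have "\<dots> \<le> (\<Sum>w\<in>uncertain. ?h (p w) / entropy W p * kl_bound w y)"
    using Q uncertain_weight_nonneg [OF H]
    by (intro sum_mono mult_left_mono ln_neg_xlnx_posterior_le_kl_bound) auto
  finally show ?thesis .
qed

theorem expected_log_entropy_drop_le:
  "(\<Sum>y\<in>UNIV. Q y * (ln (entropy W p) - ln (entropy W (posterior y)))) \<le> \<beta>"
proof (cases "entropy W p = 0")
  case True
  have "(\<Sum>y\<in>UNIV. Q y * (ln (entropy W p) - ln (entropy W (posterior y)))) = 0"
    using log_entropy_drop_eq_0_if_entropy_eq_0 [OF True] by (intro sum.neutral) blast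
  then show ?thesis using beta_nonneg by simp
next
  case False
  then have H: "entropy W p > 0"
    using entropy_nonneg [of W p] p_nonneg p_le_1 by fastforce
  have "(\<Sum>y\<in>UNIV. Q y * (ln (entropy W p) - ln (entropy W (posterior y))))
      \<le> (\<Sum>y\<in>UNIV. \<Sum>w\<in>uncertain. - (p w * ln (p w)) / entropy W p * kl_bound w y)"
    by (intro sum_mono log_entropy_drop_le_kl_bound H)
  also have "\<dots> \<le> \<beta>"
  proof (rule sum_convex_comb_le [OF finite_uncertain sum_uncertain_weights [OF H]])
    fix w assume "w \<in> uncertain"
    then show "- (p w * ln (p w)) / entropy W p \<ge> 0"
      by (rule uncertain_weight_nonneg [OF H])
    show "(\<Sum>y\<in>UNIV. kl_bound w y) \<le> \<beta>"
      using \<open>w \<in> uncertain\<close> sum_kl_bound_le by simp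
  qed
  finally show ?thesis .
qed

end

section \<open>Variable-length feedback codes\<close>

lemma joint_snoc:
  "joint P M f w (ys @ [y]) = joint P M f w ys * P (f (length ys) w ys) y"
proof -
  have "(\<Prod>k<length ys. P (f k w (take k (ys @ [y]))) ((ys @ [y]) ! k))
      = (\<Prod>k<length ys. P (f k w (take k ys)) (ys ! k))"
    by (intro prod.cong) (simp_all add: nth_append)
  then show ?thesis by (simp add: joint_def prod.lessThan_Suc)
qed

lemma kl_div_eq_sum_kl_term:
  "\<not> (\<exists>y. P x y > 0 \<and> P x' y = 0) \<Longrightarrow> kl_div P x x' = ereal (\<Sum>y\<in>UNIV. kl_term (P x y) (P x' y))"
  by (simp add: kl_div_def kl_term_def)

lemma kl_div_le_capB: "kl_div P x x' \<le> capB P"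
  unfolding capB_def by (rule SUP_upper2 [of "(x, x')"]) auto

lemma capB_nonneg: "capB P \<ge> 0"
  using kl_div_le_capB [of P undefined undefined]
  by (simp add: kl_div_eq_sum_kl_term kl_term_self zero_ereal_def)

lemma capB_finite_imp_same_support:
  assumes "capB P = ereal \<beta>"
  shows "\<not> (P x y > 0 \<and> P x' y = 0)"
proof
  assume "P x y > 0 \<and> P x' y = 0"
  then have "kl_div P x x' = \<infinity>" by (auto simp: kl_div_def)
  then show False using kl_div_le_capB [of P x x'] assms by simp
qed

lemma capB_finite_imp_sum_kl_term_le:
  assumes "capB P = ereal \<beta>"
  shows "(\<Sum>y\<in>UNIV. kl_term (P x y) (P x' y)) \<le> \<beta>"
  using kl_div_le_capB [of P x x'] assms capB_finite_imp_same_support [OF assms]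
  by (simp add: kl_div_eq_sum_kl_term)

lemma joint_nonneg: "dmc P \<Longrightarrow> joint P M f w ys \<ge> 0"
  unfolding joint_def dmc_def by (auto intro!: prod_nonneg divide_nonneg_nonneg)

lemma sum_post: "outp P M f ys > 0 \<Longrightarrow> (\<Sum>w\<in>{1..M}. post P M f w ys) = 1"
  unfolding post_def by (simp add: outp_def flip: sum_divide_distrib)

lemma bounded_divergence_channel_post:
  assumes "dmc P" "outp P M f ys > 0" "capB P = ereal \<beta>"
  shows "bounded_divergence_channel {1..M} (\<lambda>w. post P M f w ys)
    (\<lambda>w. P (f (length ys) w ys)) \<beta>"
proof
  show "\<And>w. w \<in> {1..M} \<Longrightarrow> post P M f w ys \<ge> 0"
    using joint_nonneg [OF assms(1)] assms(2) by (simp add: post_def)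
  show "\<And>w v y. w \<in> {1..M} \<Longrightarrow> v \<in> {1..M} \<Longrightarrow> P (f (length ys) w ys) y > 0
      \<Longrightarrow> P (f (length ys) v ys) y > 0"
    using capB_finite_imp_same_support [OF assms(3)] assms(1)
    by (metis dmc_def less_eq_real_def)
qed (use assms capB_finite_imp_sum_kl_term_le sum_post in \<open>auto simp: dmc_def\<close>)

lemma drift_eq_expected_log_entropy_drop:
  fixes P :: "'x::finite \<Rightarrow> 'y::finite \<Rightarrow> real" and M :: nat
    and f :: "nat \<Rightarrow> nat \<Rightarrow> 'y list \<Rightarrow> 'x" and ys :: "'y list"
  defines "p \<equiv> \<lambda>w. post P M f w ys" and "g \<equiv> \<lambda>w. P (f (length ys) w ys)"
  assumes "outp P M f ys > 0"
  shows "drift P M f ys = (\<Sum>y\<in>UNIV. mixture {1..M} p g y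
    * (ln (entropy {1..M} p) - ln (entropy {1..M} (\<lambda>w. p w * g w y / mixture {1..M} p g y))))"
proof -
  define p_ys where "p_ys = outp P M f ys"
  have p_ys: "p_ys > 0" using assms(3) by (simp add: p_ys_def)
  have joint: "joint P M f w ys = p w * p_ys" for w
    using p_ys by (simp add: p_def post_def p_ys_def)
  have outp_snoc: "outp P M f (ys @ [y]) = p_ys * mixture {1..M} p g y" for y
    unfolding outp_def [of P M f "ys @ [y]"] mixture_def
    by (simp add: joint_snoc joint g_def sum_distrib_left ac_simps)
  have "post P M f w (ys @ [y]) = p w * g w y / mixture {1..M} p g y" for w y
    unfolding post_def [of P M f w "ys @ [y]"] outp_snoc joint_snoc joint
    using p_ys by (simp add: g_def)
  then have "condH P M f (ys @ [y])
      = entropy {1..M} (\<lambda>w. p w * g w y / mixture {1..M} p g y)" for y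
    by (simp add: condH_def entropy_def)
  moreover have "condH P M f ys = entropy {1..M} p"
    by (simp add: condH_def entropy_def p_def)
  ultimately show ?thesis
    unfolding drift_def outp_snoc p_ys_def [symmetric] using p_ys by simp
qed

text \<open>The hypothesis \<open>M \<ge> 1\<close> is implied by \<open>outp P M f ys > 0\<close> and not used.\<close>
theorem lemma7:
  fixes P :: "'x::finite \<Rightarrow> 'y::finite \<Rightarrow> real"
    and M :: nat
    and f :: "nat \<Rightarrow> nat \<Rightarrow> 'y list \<Rightarrow> 'x"
    and ys :: "'y list"
  assumes "dmc P"
    and "M \<ge> 1"
    and "outp P M f ys > 0"
  shows "ereal (drift P M f ys) \<le> capB P"
proof (cases "capB P")
  case (real \<beta>)
  interpret bounded_divergence_channel "{1..M}" "\<lambda>w. post P M f w ys"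
      "\<lambda>w. P (f (length ys) w ys)" \<beta>
    using assms(1,3) real by (rule bounded_divergence_channel_post)
  show ?thesis
    using expected_log_entropy_drop_le drift_eq_expected_log_entropy_drop [OF assms(3)] real
    by simp
next
  case MInf
  then show ?thesis using capB_nonneg [of P] by simp
qed simp

end
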